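(* Let $K,T\subset\mathbb{R}^n$ be convex bodies and let $q=(q_1,\dots,q_m)$ be a closed $(K,T)$-Minkowski billiard trajectory with respect to the $K$-supporting hyperplanes $H_1,\dots,H_m$. Let $U$ be the inclusion-minimal linear subspace of $\mathbb{R}^n$ containing the outer unit normal vectors $n_K(q_1),\dots,n_K(q_m)$ normal to $H_1,\dots,H_m$, let $W=U^\perp$, and let $H_j^+$ be the closed half-space bounded by $H_j$ containing $K$. Then $H_j=(H_j\cap U)\oplus W$ and $H_j^+=(H_j^+\cap U)\oplus W$ for all $j$, the set $\bigcap_{j=1}^m(H_j^+\cap U)$ is nearly bounded in $U$, and $\bigcap_{j=1}^m H_j^+$ is nearly bounded in $\mathbb{R}^n$. If moreover $T$ is smooth, then $U$ coincides with the convex cone spanned by $n_K(q_1),\dots,n_K(q_m)$ and $\bigcap_{j=1}^m(H_j^+\cap U)$ is bounded in $U$ (and $\bigcap_{j=1}^mH_j^+$ is nearly bounded in $\mathbb{R}^n$).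
   Context: A convex body is a compact convex set in $\mathbb{R}^n$ containing the origin in its interior; it is smooth if through each boundary point there is a unique supporting hyperplane. For a convex set $C$ and $z\in\partial C$, $N_C(z)=\{v:\langle v,y-z\rangle\le 0\ \forall y\in C\}$. A subset $A$ of a linear space $U$ is nearly bounded in $U$ if it lies between two parallel affine hyperplanes of $U$. A closed polygonal curve $(q_1,\dots,q_m)$, $m\ge2$, always satisfies $q_j\ne q_{j+1}$ and $q_j\notin[q_{j-1},q_{j+1}]$ (indices mod $m$). A closed polygonal curve $q$ with vertices on $\partial K$ is a closed $(K,T)$-Minkowski billiard trajectory with respect to the $K$-supporting hyperplanes $H_1,\dots,H_m$ through $q_1,\dots,q_m$ if there are $p_1,\dots,p_m\in\partial T$, outer unit normals $n_K(q_j)\in N_K(q_j)$ normal to $H_j$, and $\mu_j\ge 0$ with $q_{j+1}-q_j\in N_T(p_j)$ and $p_{j+1}-p_j=-\mu_{j+1}n_K(q_{j+1})$ for all $j$. *)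

theory Defs
  imports "HOL-Analysis.Analysis"
begin

definition convex_body :: "'a::euclidean_space set \<Rightarrow> bool" where
  "convex_body C \<longleftrightarrow> compact C \<and> convex C \<and> 0 \<in> interior C"

definition normal_cone :: "'a::euclidean_space set \<Rightarrow> 'a \<Rightarrow> 'a set" where
  "normal_cone C z = {v. \<forall>y\<in>C. v \<bullet> (y - z) \<le> 0}"

definition supporting_hyperplane :: "'a::euclidean_space set \<Rightarrow> 'a \<Rightarrow> 'a set \<Rightarrow> bool" where
  "supporting_hyperplane C z H \<longleftrightarrow>
     z \<in> C \<and> (\<exists>v. v \<noteq> 0 \<and> H = {x. v \<bullet> x = v \<bullet> z} \<and> (\<forall>y\<in>C. v \<bullet> y \<le> v \<bullet> z))"

definition smooth_body :: "'a::euclidean_space set \<Rightarrow> bool" where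
  "smooth_body C \<longleftrightarrow> (\<forall>z\<in>frontier C. \<exists>!H. supporting_hyperplane C z H)"

text \<open>A is nearly bounded in the linear space U: it lies between two parallel
  affine hyperplanes of U (hyperplanes of U are described by a nonzero v in U).\<close>
definition nearly_bounded_in :: "'a::euclidean_space set \<Rightarrow> 'a set \<Rightarrow> bool" where
  "nearly_bounded_in U A \<longleftrightarrow>
     A \<subseteq> U \<and> (\<exists>v\<in>U. v \<noteq> 0 \<and> (\<exists>c1 c2. \<forall>x\<in>A. c1 \<le> v \<bullet> x \<and> v \<bullet> x \<le> c2))"

definition closed_polygonal :: "nat \<Rightarrow> (nat \<Rightarrow> 'a::euclidean_space) \<Rightarrow> bool" where
  "closed_polygonal m q \<longleftrightarrow> 2 \<le> m \<and>
     (\<forall>j<m. q j \<noteq> q (Suc j mod m) \<and>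
            q j \<notin> closed_segment (q ((j + m - 1) mod m)) (q (Suc j mod m)))"

text \<open>Closed (K,T)-Minkowski billiard trajectory q with respect to the K-supporting
  hyperplanes H j through q j, with witnesses: points p j, outer unit normals nK j, mu j.\<close>
definition minkowski_billiard_traj ::
  "'a::euclidean_space set \<Rightarrow> 'a set \<Rightarrow> nat \<Rightarrow> (nat \<Rightarrow> 'a) \<Rightarrow> (nat \<Rightarrow> 'a set)
   \<Rightarrow> (nat \<Rightarrow> 'a) \<Rightarrow> (nat \<Rightarrow> 'a) \<Rightarrow> (nat \<Rightarrow> real) \<Rightarrow> bool" where
  "minkowski_billiard_traj K T m q H nK p mu \<longleftrightarrow>
     closed_polygonal m q \<and>
     (\<forall>j<m. q j \<in> frontier K \<and> supporting_hyperplane K (q j) (H j) \<and>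
            p j \<in> frontier T \<and>
            norm (nK j) = 1 \<and> nK j \<in> normal_cone K (q j) \<and>
            H j = {x. nK j \<bullet> x = nK j \<bullet> q j} \<and>
            0 \<le> mu j \<and>
            q (Suc j mod m) - q j \<in> normal_cone T (p j) \<and>
            p (Suc j mod m) - p j = - (mu (Suc j mod m) *\<^sub>R nK (Suc j mod m)))"

end

theory Submission
  imports Defs
begin

text \<open>Telescoping the relation \<open>p (j+1) - p j = - mu (j+1) nK (j+1)\<close> around the closed curve gives
  \<open>\<Sum> mu j nK j = 0\<close>, and some \<open>mu k\<close> is positive because the edges of \<open>q\<close> cannot all lie in a
  single normal cone of the body \<open>T\<close>. Pairing \<open>x\<close> with this vanishing combination bounds \<open>nK k \<bullet> x\<close>
  from below on \<open>\<Inter> Hp j\<close>, whence near boundedness. The half-spaces depend only on the component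
  of \<open>x\<close> in \<open>U\<close>, which gives the splittings along \<open>U \<oplus> U\<^sup>\<bottom>\<close>. If \<open>T\<close> is smooth, normal cones of \<open>T\<close>
  are rays, so a vanishing \<open>mu k\<close> would put \<open>q k\<close> on the segment between its neighbours; hence all
  \<open>mu j\<close> are positive. Then each \<open>- nK j\<close> is a nonnegative combination of the others, so the cone
  spanned by the normals is all of \<open>U\<close>, and every \<open>nK j \<bullet> x\<close> is bounded on both sides, which makes
  \<open>\<Inter> Hp j \<inter> U\<close> bounded.\<close>

lemma sum_cyclic_shift:
  fixes f :: "nat \<Rightarrow> 'b::comm_monoid_add"
  assumes "0 < m"
  shows "(\<Sum>j<m. f (Suc j mod m)) = (\<Sum>j<m. f j)"
proof -
  have "inj_on (\<lambda>j. Suc j mod m) {..<m}"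
    by (auto simp: inj_on_def mod_Suc split: if_splits)
  moreover from this have "(\<lambda>j. Suc j mod m) ` {..<m} = {..<m}"
    using assms by (intro endo_inj_surj) auto
  ultimately have "bij_betw (\<lambda>j. Suc j mod m) {..<m} {..<m}"
    by (rule bij_betw_imageI)
  then show ?thesis
    using sum.reindex_bij_betw by blast
qed

lemma convex_cone_sum:
  assumes "convex_cone S" "\<And>i. i \<in> I \<Longrightarrow> f i \<in> S"
  shows "sum f I \<in> S"
  using assms(2)
proof (induction I rule: infinite_finite_induct)
  case (insert x F) then show ?case using assms(1) by (simp add: convex_cone_add)
qed (use assms(1) convex_cone_contains_0 in auto)

lemma convex_cone_normal_cone: "convex_cone (normal_cone C z)"
  by (auto simp: convex_cone_iff normal_cone_def inner_add_left mult_nonneg_nonpos add_nonpos_nonpos)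

lemma normal_cone_pointed:
  fixes T :: "'a::euclidean_space set"
  assumes "interior T \<noteq> {}" "v \<in> normal_cone T p" "- v \<in> normal_cone T p"
  shows "v = 0"
proof (rule ccontr)
  assume "v \<noteq> 0"
  obtain z e where "e > 0" "ball z e \<subseteq> T"
    using assms(1) by (metis all_not_in_conv mem_interior)
  moreover define y where "y = z + (e / 2 / norm v) *\<^sub>R v"
  ultimately have "z \<in> T" "y \<in> T"
    using \<open>v \<noteq> 0\<close> by (auto simp: y_def dist_norm)
  have flat: "v \<bullet> (x - p) = 0" if "x \<in> T" for x
    using assms(2,3) that by (force simp: normal_cone_def)
  have "v \<bullet> (y - z) = e / 2 * norm v"
    using \<open>v \<noteq> 0\<close> by (simp add: y_def power2_norm_eq_inner[symmetric] power2_eq_square)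
  moreover have "v \<bullet> (y - z) = v \<bullet> (y - p) - v \<bullet> (z - p)"
    by (simp add: inner_diff_right)
  ultimately show False
    using flat[OF \<open>y \<in> T\<close>] flat[OF \<open>z \<in> T\<close>] \<open>e > 0\<close> \<open>v \<noteq> 0\<close> by simp
qed

lemma normal_cone_sum_eq_0_imp_eq_0:
  fixes T :: "'a::euclidean_space set"
  assumes "interior T \<noteq> {}" "finite I" "\<And>i. i \<in> I \<Longrightarrow> v i \<in> normal_cone T p"
    and "(\<Sum>i\<in>I. v i) = 0" "k \<in> I"
  shows "v k = 0"
proof (rule normal_cone_pointed[OF assms(1,3)])
  have "- v k = (\<Sum>i\<in>I - {k}. v i)"
    using assms(2,4,5) by (simp add: sum.remove add_eq_0_iff)
  also have "\<dots> \<in> normal_cone T p"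
    using assms(3) by (intro convex_cone_sum convex_cone_normal_cone) auto
  finally show "- v k \<in> normal_cone T p" .
qed (use assms(5) in simp)

lemma parallel_of_hyperplane_eq:
  fixes u v :: "'a::euclidean_space"
  assumes "{x. v \<bullet> x = v \<bullet> p} = {x. u \<bullet> x = u \<bullet> p}" "u \<noteq> 0"
  shows "v = ((v \<bullet> u) / (u \<bullet> u)) *\<^sub>R u"
proof -
  define w where "w = v - ((v \<bullet> u) / (u \<bullet> u)) *\<^sub>R u"
  have "u \<bullet> w = 0"
    using assms(2) by (simp add: w_def inner_diff_right inner_commute)
  then have "p + w \<in> {x. v \<bullet> x = v \<bullet> p}"
    by (simp add: assms(1) inner_add_right)
  then have "v \<bullet> w = 0"
    by (simp add: inner_add_right)
  moreover have "v \<bullet> w = w \<bullet> w"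
    using \<open>u \<bullet> w = 0\<close> by (simp add: w_def inner_diff_left inner_commute)
  ultimately show ?thesis
    by (simp add: w_def)
qed

lemma supporting_hyperplane_normal_cone:
  assumes "z \<in> C" "v \<in> normal_cone C z" "v \<noteq> 0"
  shows "supporting_hyperplane C z {x. v \<bullet> x = v \<bullet> z}"
  using assms by (auto simp: supporting_hyperplane_def normal_cone_def inner_diff_right)

lemma smooth_body_normal_cone_ray:
  fixes T :: "'a::euclidean_space set"
  assumes "smooth_body T" "closed T" "interior T \<noteq> {}" "p \<in> frontier T"
    and "u \<in> normal_cone T p" "u \<noteq> 0" "v \<in> normal_cone T p" "v \<noteq> 0"
  obtains c where "c > 0" "v = c *\<^sub>R u"
proof -
  have "p \<in> T"
    using assms(2,4) by (simp add: frontier_def)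
  have "\<exists>!H. supporting_hyperplane T p H"
    using assms(1,4) by (simp add: smooth_body_def)
  then have "{x. v \<bullet> x = v \<bullet> p} = {x. u \<bullet> x = u \<bullet> p}"
    using supporting_hyperplane_normal_cone[OF \<open>p \<in> T\<close> assms(5,6)]
      supporting_hyperplane_normal_cone[OF \<open>p \<in> T\<close> assms(7,8)] by blast
  then obtain c where v: "v = c *\<^sub>R u"
    using parallel_of_hyperplane_eq assms(6) by blast
  have "\<not> c < 0"
  proof
    assume "c < 0"
    then have "- u = (- 1 / c) *\<^sub>R v"
      by (simp add: v)
    also have "\<dots> \<in> normal_cone T p"
      using \<open>c < 0\<close> assms(7) by (intro convex_cone_scaleR convex_cone_normal_cone) auto
    finally show False
      using normal_cone_pointed[OF assms(3,5)] assms(6) by blast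
  qed
  moreover have "c \<noteq> 0"
    using v assms(8) by auto
  ultimately have "c > 0"
    by linarith
  with v show thesis
    using that by blast
qed

lemma mem_closed_segment_of_pos_multiple:
  fixes x y z :: "'a::real_vector"
  assumes "c > 0" "z - y = c *\<^sub>R (y - x)"
  shows "y \<in> closed_segment x z"
proof -
  define t where "t = 1 / (1 + c)"
  have "z - x = (1 + c) *\<^sub>R (y - x)"
    using assms(2) by (simp add: algebra_simps)
  have "(1 - t) *\<^sub>R x + t *\<^sub>R z = x + t *\<^sub>R (z - x)"
    by (simp add: algebra_simps)
  also have "\<dots> = x + (t * (1 + c)) *\<^sub>R (y - x)"
    using \<open>z - x = (1 + c) *\<^sub>R (y - x)\<close> by simp
  also have "\<dots> = y"
    using assms(1) by (simp add: t_def)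
  finally have "y = (1 - t) *\<^sub>R x + t *\<^sub>R z" ..
  moreover have "0 \<le> t" "t \<le> 1"
    using assms(1) by (auto simp: t_def)
  ultimately show ?thesis
    unfolding closed_segment_def by blast
qed

lemma inner_ge_of_pos_combination_eq_0:
  fixes v :: "'i \<Rightarrow> 'a::real_inner"
  assumes "finite I" "k \<in> I" "(\<Sum>j\<in>I. mu j *\<^sub>R v j) = 0" "\<And>j. j \<in> I \<Longrightarrow> 0 \<le> mu j" "0 < mu k"
    and "\<And>j. j \<in> I \<Longrightarrow> v j \<bullet> x \<le> c j"
  shows "- (\<Sum>j\<in>I - {k}. mu j * c j) / mu k \<le> v k \<bullet> x"
proof -
  have "0 = (\<Sum>j\<in>I. mu j *\<^sub>R v j) \<bullet> x"
    using assms(3) by simp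
  also have "\<dots> = mu k * (v k \<bullet> x) + (\<Sum>j\<in>I - {k}. mu j * (v j \<bullet> x))"
    using assms(1,2) by (simp add: sum.remove inner_add_left inner_sum_left)
  also have "\<dots> \<le> mu k * (v k \<bullet> x) + (\<Sum>j\<in>I - {k}. mu j * c j)"
    using assms(4,6) by (intro add_left_mono sum_mono mult_left_mono) auto
  finally have "- (\<Sum>j\<in>I - {k}. mu j * c j) \<le> (v k \<bullet> x) * mu k"
    by (simp add: mult.commute)
  then show ?thesis
    unfolding pos_divide_le_eq[OF assms(5)] .
qed

lemma nearly_bounded_in_halfspaces_Inter:
  fixes v :: "'i \<Rightarrow> 'a::euclidean_space"
  assumes "finite I" "k \<in> I" "(\<Sum>j\<in>I. mu j *\<^sub>R v j) = 0" "\<And>j. j \<in> I \<Longrightarrow> 0 \<le> mu j" "0 < mu k"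
    and "v k \<in> U" "v k \<noteq> 0" "A \<subseteq> U" "A \<subseteq> (\<Inter>j\<in>I. {x. v j \<bullet> x \<le> c j})"
  shows "nearly_bounded_in U A"
proof -
  have "- (\<Sum>j\<in>I - {k}. mu j * c j) / mu k \<le> v k \<bullet> x \<and> v k \<bullet> x \<le> c k" if "x \<in> A" for x
    using that assms(2,9) by (blast intro: inner_ge_of_pos_combination_eq_0[OF assms(1-5)])
  then show ?thesis
    unfolding nearly_bounded_in_def using assms(6-8) by blast
qed

lemma bounded_of_inner_bounded_span:
  fixes v :: "'i \<Rightarrow> 'a::euclidean_space"
  assumes "finite I" "A \<subseteq> span (v ` I)" "\<And>x j. x \<in> A \<Longrightarrow> j \<in> I \<Longrightarrow> \<bar>v j \<bullet> x\<bar> \<le> M"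
  shows "bounded A"
proof -
  define f where "f x = (\<Sum>j\<in>I. (v j \<bullet> x) *\<^sub>R v j)" for x
  have "bounded_linear f"
    unfolding f_def by (intro bounded_linear_sum bounded_linear_compose[OF bounded_linear_scaleR_left]
        bounded_linear_inner_right)
  moreover have "x = 0" if "x \<in> span (v ` I)" "f x = 0" for x
  proof -
    have "(\<Sum>j\<in>I. (v j \<bullet> x)\<^sup>2) = x \<bullet> f x"
      by (simp add: f_def inner_sum_right power2_eq_square inner_commute)
    also have "\<dots> = 0"
      using that(2) by simp
    finally have "\<forall>j\<in>I. (v j \<bullet> x)\<^sup>2 = 0"
      using sum_nonneg_eq_0_iff[OF assms(1), of "\<lambda>j. (v j \<bullet> x)\<^sup>2"] by simp
    then have "\<forall>j\<in>I. v j \<bullet> x = 0"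
      by simp
    then have "orthogonal x x"
      by (intro orthogonal_to_span[OF that(1)]) (auto simp: orthogonal_def inner_commute)
    then show ?thesis
      by (simp add: orthogonal_def)
  qed
  ultimately obtain e where "e > 0" and e: "\<forall>x\<in>span (v ` I). e * norm x \<le> norm (f x)"
    using injective_imp_isometric[OF closed_span subspace_span] by blast
  have f_bound: "norm (f x) \<le> M * (\<Sum>j\<in>I. norm (v j))" if "x \<in> A" for x
  proof -
    have "norm (f x) \<le> (\<Sum>j\<in>I. \<bar>v j \<bullet> x\<bar> * norm (v j))"
      unfolding f_def by (rule order_trans[OF norm_sum]) simp
    also have "\<dots> \<le> (\<Sum>j\<in>I. M * norm (v j))"
      using assms(3)[OF that] by (intro sum_mono mult_right_mono) auto
    finally show ?thesis
      by (simp add: sum_distrib_left)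
  qed
  have "norm x \<le> M * (\<Sum>j\<in>I. norm (v j)) / e" if "x \<in> A" for x
  proof -
    have "e * norm x \<le> M * (\<Sum>j\<in>I. norm (v j))"
      using e assms(2) that f_bound[OF that] by fastforce
    then show ?thesis
      by (simp add: pos_le_divide_eq[OF \<open>e > 0\<close>] mult.commute)
  qed
  then show ?thesis
    unfolding bounded_iff by blast
qed

lemma bounded_halfspaces_Inter_span:
  fixes v :: "'i \<Rightarrow> 'a::euclidean_space"
  assumes "finite I" "(\<Sum>j\<in>I. mu j *\<^sub>R v j) = 0" "\<And>j. j \<in> I \<Longrightarrow> 0 < mu j"
    and "A \<subseteq> span (v ` I)" "A \<subseteq> (\<Inter>j\<in>I. {x. v j \<bullet> x \<le> c j})"
  shows "bounded A"
proof (rule bounded_of_inner_bounded_span[OF assms(1,4)])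
  define L where "L k = - (\<Sum>j\<in>I - {k}. mu j * c j) / mu k" for k
  fix x j assume "x \<in> A" "j \<in> I"
  then have "L j \<le> v j \<bullet> x" "v j \<bullet> x \<le> c j"
    using assms(3,5) unfolding L_def
    by (blast intro: inner_ge_of_pos_combination_eq_0[OF assms(1) _ assms(2)] less_imp_le)+
  then have "\<bar>v j \<bullet> x\<bar> \<le> \<bar>L j\<bar> + \<bar>c j\<bar>"
    by linarith
  also have "\<dots> \<le> (\<Sum>k\<in>I. \<bar>L k\<bar> + \<bar>c k\<bar>)"
    using \<open>j \<in> I\<close> assms(1) by (intro member_le_sum) auto
  finally show "\<bar>v j \<bullet> x\<bar> \<le> (\<Sum>k\<in>I. \<bar>L k\<bar> + \<bar>c k\<bar>)" .
qed

lemma span_eq_convex_cone_hull_of_pos_combination_eq_0: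
  fixes v :: "'i \<Rightarrow> 'a::real_vector"
  assumes "finite I" "(\<Sum>i\<in>I. mu i *\<^sub>R v i) = 0" "\<And>i. i \<in> I \<Longrightarrow> 0 < mu i"
  shows "span (v ` I) = convex_cone hull (v ` I)"
proof
  define C where "C = convex_cone hull (v ` I)"
  have "convex_cone C"
    by (simp add: C_def convex_cone_convex_cone_hull)
  have neg_gen: "- v i \<in> C" if "i \<in> I" for i
  proof -
    have "mu i *\<^sub>R v i + (\<Sum>j\<in>I - {i}. mu j *\<^sub>R v j) = 0"
      using assms(1,2) that by (simp add: sum.remove)
    then have "- v i = (1 / mu i) *\<^sub>R (\<Sum>j\<in>I - {i}. mu j *\<^sub>R v j)"
      using assms(3)[OF that] by (simp add: add_eq_0_iff)
    also have "\<dots> \<in> C"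
    proof (rule convex_cone_scaleR[OF \<open>convex_cone C\<close>])
      show "0 \<le> 1 / mu i"
        using assms(3)[OF that] by simp
      show "(\<Sum>j\<in>I - {i}. mu j *\<^sub>R v j) \<in> C"
        using assms(3) by (intro convex_cone_sum[OF \<open>convex_cone C\<close>] convex_cone_scaleR[OF \<open>convex_cone C\<close>])
          (auto simp: C_def hull_inc less_imp_le)
    qed
    finally show ?thesis .
  qed
  have "convex_cone (C \<inter> uminus ` C)"
    using convex_cone_Inter[of "{C, uminus ` C}"] convex_cone_negations \<open>convex_cone C\<close> by auto
  moreover have "\<forall>x \<in> C \<inter> uminus ` C. - x \<in> C \<inter> uminus ` C"
    by (auto simp: image_iff)
  ultimately have "subspace (C \<inter> uminus ` C)"
    by (simp add: subspace_convex_cone_symmetric)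
  moreover have "v i \<in> C \<inter> uminus ` C" if "i \<in> I" for i
    using neg_gen[OF that] rev_image_eqI[of "- v i" C "v i" uminus] that
    by (simp add: C_def hull_inc)
  ultimately have "span (v ` I) \<subseteq> C \<inter> uminus ` C"
    by (intro span_minimal) auto
  then show "span (v ` I) \<subseteq> C"
    by blast
next
  show "convex_cone hull (v ` I) \<subseteq> span (v ` I)"
    by (intro hull_minimal span_superset convex_cone_span)
qed

lemma inner_level_set_eq_sums_orthogonal_comp:
  fixes U :: "'a::euclidean_space set"
  assumes "subspace U" "v \<in> U"
  shows "{x. P (v \<bullet> x)} = {a + w |a w. a \<in> {x. P (v \<bullet> x)} \<inter> U \<and> w \<in> orthogonal_comp U}"
proof (intro set_eqI iffI)
  fix x assume "x \<in> {x. P (v \<bullet> x)}"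
  obtain a w where a: "a \<in> span U" and orth: "\<And>u. u \<in> span U \<Longrightarrow> orthogonal w u"
    and "x = a + w"
    using orthogonal_subspace_decomp_exists by blast
  have "w \<in> orthogonal_comp U"
    unfolding orthogonal_comp_def using orth span_base orthogonal_commute by blast
  moreover have "v \<bullet> w = 0"
    using orth[OF span_base[OF assms(2)]] by (simp add: orthogonal_def inner_commute)
  moreover have "a \<in> U"
    using a assms(1) by (metis span_eq_iff)
  moreover have "P (v \<bullet> a)"
    using \<open>x \<in> {x. P (v \<bullet> x)}\<close> \<open>x = a + w\<close> \<open>v \<bullet> w = 0\<close> by (simp add: inner_add_right)
  ultimately show "x \<in> {a + w |a w. a \<in> {x. P (v \<bullet> x)} \<inter> U \<and> w \<in> orthogonal_comp U}"
    using \<open>x = a + w\<close> by blast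
next
  fix x assume "x \<in> {a + w |a w. a \<in> {x. P (v \<bullet> x)} \<inter> U \<and> w \<in> orthogonal_comp U}"
  then show "x \<in> {x. P (v \<bullet> x)}"
    using assms(2) by (auto simp: orthogonal_comp_def orthogonal_def inner_add_right)
qed

lemma minkowski_billiard_trajD:
  assumes "minkowski_billiard_traj K T m q H nK p mu"
  shows "0 < m"
    and "j < m \<Longrightarrow> p j \<in> frontier T"
    and "j < m \<Longrightarrow> nK j \<noteq> 0"
    and "j < m \<Longrightarrow> 0 \<le> mu j"
    and "j < m \<Longrightarrow> H j = {x. nK j \<bullet> x = nK j \<bullet> q j}"
    and "j < m \<Longrightarrow> q (Suc j mod m) - q j \<in> normal_cone T (p j)"
    and "j < m \<Longrightarrow> q (Suc j mod m) - q j \<noteq> 0"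
    and "j < m \<Longrightarrow> p (Suc j mod m) - p j = - (mu (Suc j mod m) *\<^sub>R nK (Suc j mod m))"
    and "j < m \<Longrightarrow> q j \<notin> closed_segment (q ((j + m - 1) mod m)) (q (Suc j mod m))"
  using assms by (auto simp: minkowski_billiard_traj_def closed_polygonal_def)

lemma minkowski_billiard_traj_closing:
  assumes "minkowski_billiard_traj K T m q H nK p mu"
  shows "(\<Sum>j<m. mu j *\<^sub>R nK j) = 0"
proof -
  note traj = minkowski_billiard_trajD[OF assms]
  have "(\<Sum>j<m. mu j *\<^sub>R nK j) = (\<Sum>j<m. mu (Suc j mod m) *\<^sub>R nK (Suc j mod m))"
    using sum_cyclic_shift[OF traj(1), of "\<lambda>j. mu j *\<^sub>R nK j"] by simp
  also have "\<dots> = - (\<Sum>j<m. p (Suc j mod m) - p j)"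
    using traj(8) by (simp add: sum_negf[symmetric])
  also have "(\<Sum>j<m. p (Suc j mod m) - p j) = 0"
    by (simp add: sum_subtractf sum_cyclic_shift[OF traj(1)])
  finally show ?thesis
    by simp
qed

lemma minkowski_billiard_traj_ex_mu_pos:
  fixes T :: "'a::euclidean_space set"
  assumes "interior T \<noteq> {}" "minkowski_billiard_traj K T m q H nK p mu"
  shows "\<exists>k<m. 0 < mu k"
proof (rule ccontr)
  assume no_pos: "\<not> (\<exists>k<m. 0 < mu k)"
  note traj = minkowski_billiard_trajD[OF assms(2)]
  have mu_0: "mu j = 0" if "j < m" for j
    using no_pos traj(4)[OF that] that by (meson not_less order.antisym)
  have p_const: "p j = p 0" if "j < m" for j
    using that
  proof (induction j)
    case (Suc j)
    then have "p (Suc j) - p j = - (mu (Suc j) *\<^sub>R nK (Suc j))"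
      using traj(8)[of j] by simp
    then show ?case
      using Suc mu_0 by simp
  qed simp
  define e where "e j = q (Suc j mod m) - q j" for j
  have "e 0 = 0"
  proof (rule normal_cone_sum_eq_0_imp_eq_0[OF assms(1) finite_lessThan, where v = e and k = 0])
    show "e j \<in> normal_cone T (p 0)" if "j \<in> {..<m}" for j
      using traj(6)[of j] p_const[of j] that by (simp add: e_def)
    show "(\<Sum>j<m. e j) = 0"
      by (simp add: e_def sum_subtractf sum_cyclic_shift[OF traj(1)])
  qed (use traj(1) in simp)
  then show False
    using traj(7)[OF traj(1)] by (simp add: e_def)
qed

lemma minkowski_billiard_traj_mu_pos:
  fixes T :: "'a::euclidean_space set"
  assumes "smooth_body T" "convex_body T" "minkowski_billiard_traj K T m q H nK p mu" "k < m"
  shows "0 < mu k"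
proof (rule ccontr)
  assume "\<not> 0 < mu k"
  note traj = minkowski_billiard_trajD[OF assms(3)]
  have "mu k = 0"
    using \<open>\<not> 0 < mu k\<close> traj(4)[OF assms(4)] by simp
  define j where "j = (k + m - 1) mod m"
  have j: "j < m" "Suc j mod m = k"
    using assms(4) unfolding j_def by (auto simp: mod_Suc_eq)
  have "p k = p j"
    using traj(8)[OF j(1)] j(2) \<open>mu k = 0\<close> by simp
  have "closed T" "interior T \<noteq> {}"
    using assms(2) by (auto simp: convex_body_def compact_imp_closed)
  obtain c where "c > 0" "q (Suc k mod m) - q k = c *\<^sub>R (q k - q j)"
  proof (rule smooth_body_normal_cone_ray[OF assms(1) \<open>closed T\<close> \<open>interior T \<noteq> {}\<close> traj(2)[OF j(1)]])
    show "q k - q j \<in> normal_cone T (p j)" "q k - q j \<noteq> 0"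
      using traj(6,7)[OF j(1)] j(2) by auto
    show "q (Suc k mod m) - q k \<in> normal_cone T (p j)" "q (Suc k mod m) - q k \<noteq> 0"
      using traj(6,7)[OF assms(4)] \<open>p k = p j\<close> by auto
  qed
  then have "q k \<in> closed_segment (q j) (q (Suc k mod m))"
    by (rule mem_closed_segment_of_pos_multiple)
  then show False
    using traj(9)[OF assms(4)] by (simp add: j_def)
qed

theorem proposition3p8:
  fixes K T :: "'a::euclidean_space set"
    and m :: nat and q p nK :: "nat \<Rightarrow> 'a" and H :: "nat \<Rightarrow> 'a set" and mu :: "nat \<Rightarrow> real"
  assumes "convex_body K" and "convex_body T"
    and "minkowski_billiard_traj K T m q H nK p mu"
  defines "U \<equiv> span (nK ` {..<m})"
    and "Hp \<equiv> (\<lambda>j. {x. nK j \<bullet> x \<le> nK j \<bullet> q j})"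
  shows "(\<forall>j<m. H j = {a + w |a w. a \<in> H j \<inter> U \<and> w \<in> orthogonal_comp U}
              \<and> Hp j = {a + w |a w. a \<in> Hp j \<inter> U \<and> w \<in> orthogonal_comp U})
         \<and> nearly_bounded_in U (\<Inter>j<m. Hp j \<inter> U)
         \<and> nearly_bounded_in UNIV (\<Inter>j<m. Hp j)
         \<and> (smooth_body T \<longrightarrow>
              U = convex_cone hull (nK ` {..<m})
              \<and> bounded (\<Inter>j<m. Hp j \<inter> U)
              \<and> nearly_bounded_in UNIV (\<Inter>j<m. Hp j))"
proof -
  note traj = minkowski_billiard_trajD[OF assms(3)]
  have nK_U: "nK j \<in> U" if "j < m" for j
    using that by (simp add: U_def span_base)
  have "subspace U" "interior T \<noteq> {}"
    using assms(2) by (auto simp: U_def convex_body_def)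
  have closing: "(\<Sum>j\<in>{..<m}. mu j *\<^sub>R nK j) = 0"
    using minkowski_billiard_traj_closing[OF assms(3)] .
  have splits: "H j = {a + w |a w. a \<in> H j \<inter> U \<and> w \<in> orthogonal_comp U}
      \<and> Hp j = {a + w |a w. a \<in> Hp j \<inter> U \<and> w \<in> orthogonal_comp U}" if "j < m" for j
    unfolding Hp_def traj(5)[OF that]
    using inner_level_set_eq_sums_orthogonal_comp[OF \<open>subspace U\<close> nK_U[OF that], where P = "\<lambda>t. t = nK j \<bullet> q j"]
      inner_level_set_eq_sums_orthogonal_comp[OF \<open>subspace U\<close> nK_U[OF that], where P = "\<lambda>t. t \<le> nK j \<bullet> q j"]
    by (intro conjI)
  obtain k where "k < m" "0 < mu k"
    using minkowski_billiard_traj_ex_mu_pos[OF \<open>interior T \<noteq> {}\<close> assms(3)] by blast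
  have Inter_subset: "(\<Inter>j<m. Hp j \<inter> U) \<subseteq> U" "(\<Inter>j<m. Hp j \<inter> U) \<subseteq> (\<Inter>j<m. Hp j)"
    using traj(1) by blast+
  have "nearly_bounded_in U (\<Inter>j<m. Hp j \<inter> U)"
    by (rule nearly_bounded_in_halfspaces_Inter[OF finite_lessThan _ closing, where c = "\<lambda>j. nK j \<bullet> q j"])
      (use traj(3,4) nK_U \<open>k < m\<close> \<open>0 < mu k\<close> Inter_subset in \<open>auto simp: Hp_def\<close>)
  moreover have "nearly_bounded_in UNIV (\<Inter>j<m. Hp j)"
    by (rule nearly_bounded_in_halfspaces_Inter[OF finite_lessThan _ closing, where c = "\<lambda>j. nK j \<bullet> q j"])
      (use traj(3,4) \<open>k < m\<close> \<open>0 < mu k\<close> in \<open>auto simp: Hp_def\<close>)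
  moreover have "U = convex_cone hull (nK ` {..<m})" "bounded (\<Inter>j<m. Hp j \<inter> U)"
    if "smooth_body T"
  proof -
    have pos: "\<And>j. j \<in> {..<m} \<Longrightarrow> 0 < mu j"
      using minkowski_billiard_traj_mu_pos[OF that assms(2,3)] by simp
    show "U = convex_cone hull (nK ` {..<m})"
      unfolding U_def by (rule span_eq_convex_cone_hull_of_pos_combination_eq_0[OF finite_lessThan closing pos])
    show "bounded (\<Inter>j<m. Hp j \<inter> U)"
      by (rule bounded_halfspaces_Inter_span[OF finite_lessThan closing pos, where c = "\<lambda>j. nK j \<bullet> q j"])
        (use Inter_subset in \<open>auto simp: U_def Hp_def\<close>)
  qed
  ultimately show ?thesis
    using splits by blast
qed

end
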